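(* Consider the discrete-time control system $x_{k+1}=f(x_k,u_k)$ with the reward $r(x,u)=R-x^TQx$ and the optimal value function $V_\gamma(x)=\sup_{\mathbf u}\sum_{k=0}^\infty\gamma^k r(\Psi(k,x,\mathbf u(k)),\mathbf u(k))$, under the standing assumptions (A1)–(A3) in the context. Then there exist $\alpha_1,\alpha_2\in\mathcal K_\infty$, a constant $\gamma^\star\in(0,1)$ and a constant $c>0$ such that for every $\gamma\in(\gamma^\star,1)$: (i) $\alpha_1(\|x\|)\le \frac{R}{1-\gamma}-V_\gamma(x)\le \alpha_2(\|x\|)$ for all $x\in\mathbb R^n$; and (ii) $V_\gamma(x)-V_\gamma(y)\le -c\|x\|^2$ for all $x\in\mathbb R^n$, where $y=f(x,u^\star_1(x))$ and $u^\star_1(x)$ is the first control input of an optimal control sequence $\mathbf u^\star$ for the initial condition $x$ (i.e. one attaining $V_\gamma(x)$).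
   Context: System: $x_{k+1}=f(x_k,u_k)$ with states $x_k\in\mathbb R^n$ (in the paper, in a compact convex set $D\subset\mathbb R^n$) and inputs $u_k\in\mathcal U\subset\mathbb R^m$; the origin is an equilibrium. For an infinite control sequence $\mathbf u=(u_1,u_2,\dots)$, $\Psi(k,x_0,\mathbf u(k))$ denotes the state at time $k$ starting from $x_0$ (flow map). (A1) $f$ is Lipschitz: $\|f(x,u)-f(y,w)\|\le L_x\|x-y\|+L_u\|u-w\|$. The reward is $r(x,u)=R-x^TQx$ with a constant $R>0$ and a positive definite matrix $Q$. For $\gamma\in(0,1)$ the discounted objective is $\mathbf J^{\mathbf u}_\gamma(x_0)=\sum_{k=0}^\infty \gamma^k r(\Psi(k,x_0,\mathbf u(k)),\mathbf u(k))$ and $V_\gamma(x_0)=\sup_{\mathbf u}\mathbf J^{\mathbf u}_\gamma(x_0)$. (A2) For every initial condition $x_0\in\mathbb R^n$ there exists a control sequence $\mathbf u^\star$ with $V_\gamma(x_0)=\mathbf J^{\mathbf u^\star}_\gamma(x_0)$. (A3) There is a constant $a_V$ such that $\frac{R}{1-\gamma}-V_\gamma(x)\le a_V\|x\|^2$ for all $\gamma\in(0,1)$ and $x\in\mathbb R^n$. A function $\alpha:\mathbb R_{\ge0}\to\mathbb R_{\ge0}$ is of class $\mathcal K_\infty$ if it is continuous, zero at zero, strictly increasing and unbounded. *)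

theory Defs
  imports "HOL-Analysis.Analysis"
begin

text \<open>Flow map: state at time k from initial state x0 under control sequence u
  (u 0 is the first control input, called u_1 in the paper).\<close>
fun flow :: "('s \<Rightarrow> 'c \<Rightarrow> 's) \<Rightarrow> nat \<Rightarrow> 's \<Rightarrow> (nat \<Rightarrow> 'c) \<Rightarrow> 's" where
  "flow f 0 x0 u = x0"
| "flow f (Suc k) x0 u = f (flow f k x0 u) (u k)"

definition reward :: "real \<Rightarrow> real^'n^'n \<Rightarrow> real^'n \<Rightarrow> real^'m \<Rightarrow> real" where
  "reward R Q x w = R - x \<bullet> (Q *v x)"

definition disc_term ::
  "(real^'n \<Rightarrow> real^'m \<Rightarrow> real^'n) \<Rightarrow> real \<Rightarrow> real^'n^'n \<Rightarrow> real \<Rightarrow> real^'n \<Rightarrow> (nat \<Rightarrow> real^'m) \<Rightarrow> nat \<Rightarrow> real" where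
  "disc_term f R Q \<gamma> x0 u k = \<gamma> ^ k * reward R Q (flow f k x0 u) (u k)"

definition J_obj ::
  "(real^'n \<Rightarrow> real^'m \<Rightarrow> real^'n) \<Rightarrow> real \<Rightarrow> real^'n^'n \<Rightarrow> real \<Rightarrow> real^'n \<Rightarrow> (nat \<Rightarrow> real^'m) \<Rightarrow> real" where
  "J_obj f R Q \<gamma> x0 u = (\<Sum>k. disc_term f R Q \<gamma> x0 u k)"

text \<open>Admissible control sequences: values in U and a convergent objective series
  (the terms are bounded above by gamma^k R, so a divergent series has value -infinity
  and does not contribute to the supremum).\<close>
definition admissible ::
  "(real^'n \<Rightarrow> real^'m \<Rightarrow> real^'n) \<Rightarrow> (real^'m) set \<Rightarrow> real \<Rightarrow> real^'n^'n \<Rightarrow> real \<Rightarrow> real^'n \<Rightarrow> (nat \<Rightarrow> real^'m) \<Rightarrow> bool" where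
  "admissible f U R Q \<gamma> x0 u \<longleftrightarrow> (\<forall>k. u k \<in> U) \<and> summable (disc_term f R Q \<gamma> x0 u)"

definition V_opt ::
  "(real^'n \<Rightarrow> real^'m \<Rightarrow> real^'n) \<Rightarrow> (real^'m) set \<Rightarrow> real \<Rightarrow> real^'n^'n \<Rightarrow> real \<Rightarrow> real^'n \<Rightarrow> real" where
  "V_opt f U R Q \<gamma> x0 = Sup {J_obj f R Q \<gamma> x0 u | u. admissible f U R Q \<gamma> x0 u}"

definition optimal_seq ::
  "(real^'n \<Rightarrow> real^'m \<Rightarrow> real^'n) \<Rightarrow> (real^'m) set \<Rightarrow> real \<Rightarrow> real^'n^'n \<Rightarrow> real \<Rightarrow> real^'n \<Rightarrow> (nat \<Rightarrow> real^'m) \<Rightarrow> bool" where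
  "optimal_seq f U R Q \<gamma> x0 u \<longleftrightarrow>
     admissible f U R Q \<gamma> x0 u \<and> J_obj f R Q \<gamma> x0 u = V_opt f U R Q \<gamma> x0"

definition class_Kinf :: "(real \<Rightarrow> real) \<Rightarrow> bool" where
  "class_Kinf \<alpha> \<longleftrightarrow> continuous_on {0..} \<alpha> \<and> \<alpha> 0 = 0 \<and> strict_mono_on {0..} \<alpha>
      \<and> (\<forall>t\<ge>0. \<alpha> t \<ge> 0) \<and> filterlim \<alpha> at_top at_top"

end

theory Submission
  imports Defs
begin

text \<open>Write \<open>W x = R / (1 - \<gamma>) - V x\<close> for the gap to the largest possible value.
  Splitting off the first step of an optimal sequence \<open>u\<close> at \<open>x\<close> gives the Bellman
  inequality \<open>x \<bullet> Q x + \<gamma> W y \<le> W x\<close> with \<open>y = f x (u 0)\<close> and \<open>W y \<ge> 0\<close>. This yields the lower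
  bound \<open>W x \<ge> x \<bullet> Q x \<ge> l \<parallel>x\<parallel>\<^sup>2\<close>, and, together with the upper bound \<open>W x \<le> a \<parallel>x\<parallel>\<^sup>2\<close> of (A3),
  also \<open>W y \<le> a \<parallel>x\<parallel>\<^sup>2 / \<gamma>\<close>. Hence \<open>V x - V y = W y - W x \<le> (1 - \<gamma>) W y - x \<bullet> Q x
  \<le> ((1 - \<gamma>) a / \<gamma> - l) \<parallel>x\<parallel>\<^sup>2\<close>, which is at most \<open>-l/2 \<parallel>x\<parallel>\<^sup>2\<close> once \<open>\<gamma>\<close> is close to 1.\<close>

lemma flow_Suc_shift:
  "flow f (Suc k) x u = flow f k (f x (u 0)) (\<lambda>k. u (Suc k))"
  by (induction k) auto

lemma disc_term_Suc:
  "disc_term f R Q \<gamma> x u (Suc k) = \<gamma> * disc_term f R Q \<gamma> (f x (u 0)) (\<lambda>k. u (Suc k)) k"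
  unfolding disc_term_def flow_Suc_shift by simp

lemma admissible_tail:
  assumes adm: "admissible f U R Q \<gamma> x u" and "\<gamma> \<noteq> 0"
  shows "admissible f U R Q \<gamma> (f x (u 0)) (\<lambda>k. u (Suc k))"
proof -
  have "summable (\<lambda>k. disc_term f R Q \<gamma> x u (Suc k))"
    using adm summable_Suc_iff unfolding admissible_def by blast
  then have "summable (disc_term f R Q \<gamma> (f x (u 0)) (\<lambda>k. u (Suc k)))"
    using \<open>\<gamma> \<noteq> 0\<close> unfolding disc_term_Suc summable_cmult_iff by blast
  then show ?thesis
    using adm unfolding admissible_def by auto
qed

lemma J_obj_unfold:
  assumes adm: "admissible f U R Q \<gamma> x u" and "\<gamma> \<noteq> 0"
  shows "J_obj f R Q \<gamma> x u
           = reward R Q x (u 0) + \<gamma> * J_obj f R Q \<gamma> (f x (u 0)) (\<lambda>k. u (Suc k))"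
proof -
  have "summable (disc_term f R Q \<gamma> x u)"
    using adm unfolding admissible_def by blast
  then have "J_obj f R Q \<gamma> x u = (\<Sum>k. disc_term f R Q \<gamma> x u (Suc k)) + disc_term f R Q \<gamma> x u 0"
    unfolding J_obj_def by (simp add: suminf_split_head)
  moreover have "summable (disc_term f R Q \<gamma> (f x (u 0)) (\<lambda>k. u (Suc k)))"
    using admissible_tail[OF assms] unfolding admissible_def by blast
  then have "(\<Sum>k. disc_term f R Q \<gamma> x u (Suc k)) = \<gamma> * J_obj f R Q \<gamma> (f x (u 0)) (\<lambda>k. u (Suc k))"
    unfolding disc_term_Suc J_obj_def by (rule suminf_mult)
  ultimately show ?thesis
    unfolding disc_term_def by simp
qed

lemma J_obj_le:
  fixes Q :: "real^'n^'n"
  assumes adm: "admissible f U R Q \<gamma> x u" and "0 < \<gamma>" "\<gamma> < 1"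
    and psd: "\<And>x. x \<bullet> (Q *v x) \<ge> 0"
  shows "J_obj f R Q \<gamma> x u \<le> R / (1 - \<gamma>)"
proof -
  have geom: "(\<lambda>k. \<gamma> ^ k * R) sums (R / (1 - \<gamma>))"
    using sums_mult2[OF geometric_sums[of \<gamma>], of R] \<open>0 < \<gamma>\<close> \<open>\<gamma> < 1\<close> by simp
  have "disc_term f R Q \<gamma> x u k \<le> \<gamma> ^ k * R" for k
    unfolding disc_term_def reward_def
    using psd \<open>0 < \<gamma>\<close> by (intro mult_left_mono) auto
  then have "J_obj f R Q \<gamma> x u \<le> (\<Sum>k. \<gamma> ^ k * R)"
    using adm sums_summable[OF geom] unfolding J_obj_def admissible_def
    by (intro suminf_le) auto
  then show ?thesis
    using sums_unique[OF geom] by simp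
qed

lemma J_obj_le_V_opt:
  fixes Q :: "real^'n^'n"
  assumes "admissible f U R Q \<gamma> x u" and "0 < \<gamma>" "\<gamma> < 1"
    and "\<And>x. x \<bullet> (Q *v x) \<ge> 0"
  shows "J_obj f R Q \<gamma> x u \<le> V_opt f U R Q \<gamma> x"
  unfolding V_opt_def using assms J_obj_le[OF _ assms(2-4)]
  by (intro cSup_upper bdd_aboveI[where M = "R / (1 - \<gamma>)"]) auto

text \<open>The admissible sequence is needed because \<open>Sup {}\<close> is an unspecified real.\<close>

lemma V_opt_le:
  fixes Q :: "real^'n^'n"
  assumes "admissible f U R Q \<gamma> x u" and "0 < \<gamma>" "\<gamma> < 1"
    and "\<And>x. x \<bullet> (Q *v x) \<ge> 0"
  shows "V_opt f U R Q \<gamma> x \<le> R / (1 - \<gamma>)"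
  unfolding V_opt_def using assms J_obj_le[OF _ assms(2-4)]
  by (intro cSup_least) auto

lemma V_opt_gap_bellman:
  fixes Q :: "real^'n^'n"
  assumes opt: "optimal_seq f U R Q \<gamma> x u" and "0 < \<gamma>" "\<gamma> < 1"
    and psd: "\<And>x. x \<bullet> (Q *v x) \<ge> 0"
  defines "W \<equiv> \<lambda>z. R / (1 - \<gamma>) - V_opt f U R Q \<gamma> z"
  shows "x \<bullet> (Q *v x) + \<gamma> * W (f x (u 0)) \<le> W x"
    and "0 \<le> W (f x (u 0))"
proof -
  let ?y = "f x (u 0)" and ?v = "\<lambda>k. u (Suc k)"
  have adm: "admissible f U R Q \<gamma> x u" and eq: "J_obj f R Q \<gamma> x u = V_opt f U R Q \<gamma> x"
    using opt unfolding optimal_seq_def by auto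
  have tail: "admissible f U R Q \<gamma> ?y ?v"
    using admissible_tail[OF adm] \<open>0 < \<gamma>\<close> by simp
  have "J_obj f R Q \<gamma> ?y ?v \<le> V_opt f U R Q \<gamma> ?y"
    using J_obj_le_V_opt[OF tail \<open>0 < \<gamma>\<close> \<open>\<gamma> < 1\<close> psd] .
  then have "V_opt f U R Q \<gamma> x \<le> R - x \<bullet> (Q *v x) + \<gamma> * V_opt f U R Q \<gamma> ?y"
    using J_obj_unfold[OF adm] eq \<open>0 < \<gamma>\<close> unfolding reward_def by simp
  moreover have "R / (1 - \<gamma>) = R + \<gamma> * (R / (1 - \<gamma>))"
    using \<open>\<gamma> < 1\<close> by (simp add: field_simps)
  moreover have "\<gamma> * W ?y = \<gamma> * (R / (1 - \<gamma>)) - \<gamma> * V_opt f U R Q \<gamma> ?y"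
    unfolding W_def by (simp add: right_diff_distrib)
  ultimately show "x \<bullet> (Q *v x) + \<gamma> * W ?y \<le> W x"
    unfolding W_def by linarith
  show "0 \<le> W ?y"
    using V_opt_le[OF tail \<open>0 < \<gamma>\<close> \<open>\<gamma> < 1\<close> psd] unfolding W_def by simp
qed

lemma bellman_gap_decrease:
  fixes \<gamma> q s l a Wx Wy :: real
  assumes "0 < \<gamma>" "\<gamma> \<le> 1" "0 \<le> l" "0 \<le> s"
    and bellman: "q + \<gamma> * Wy \<le> Wx"
    and upper: "Wx \<le> a * s" and lower: "l * s \<le> q"
    and discount: "(1 - \<gamma>) * a \<le> \<gamma> * (l / 2)"
  shows "Wy - Wx \<le> - (l / 2) * s"
proof -
  have "\<gamma> * Wy \<le> a * s"
    using bellman upper lower mult_nonneg_nonneg[OF \<open>0 \<le> l\<close> \<open>0 \<le> s\<close>] by linarith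
  then have "\<gamma> * ((1 - \<gamma>) * Wy) \<le> \<gamma> * ((l / 2) * s)"
    using mult_left_mono[of "\<gamma> * Wy" "a * s" "1 - \<gamma>"]
      mult_right_mono[OF discount \<open>0 \<le> s\<close>] \<open>\<gamma> \<le> 1\<close>
    by (simp add: algebra_simps)
  then have "(1 - \<gamma>) * Wy \<le> (l / 2) * s"
    using \<open>0 < \<gamma>\<close> by simp
  then show ?thesis
    using bellman lower by (simp add: algebra_simps)
qed

lemma quadratic_form_le_V_opt_gap:
  fixes Q :: "real^'n^'n"
  assumes opt: "optimal_seq f U R Q \<gamma> x u" and \<gamma>: "0 < \<gamma>" "\<gamma> < 1"
    and psd: "\<And>x. x \<bullet> (Q *v x) \<ge> 0"
  shows "x \<bullet> (Q *v x) \<le> R / (1 - \<gamma>) - V_opt f U R Q \<gamma> x"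
proof -
  have "0 \<le> \<gamma> * (R / (1 - \<gamma>) - V_opt f U R Q \<gamma> (f x (u 0)))"
    using V_opt_gap_bellman(2)[OF opt \<gamma> psd] \<gamma> by simp
  then show ?thesis
    using V_opt_gap_bellman(1)[OF opt \<gamma> psd] by linarith
qed

lemma V_opt_decrease:
  fixes Q :: "real^'n^'n"
  assumes opt: "optimal_seq f U R Q \<gamma> x u" and \<gamma>: "0 < \<gamma>" "\<gamma> < 1"
    and psd: "\<And>x. x \<bullet> (Q *v x) \<ge> 0"
    and "0 \<le> l" and lower: "l * norm x ^ 2 \<le> x \<bullet> (Q *v x)"
    and upper: "R / (1 - \<gamma>) - V_opt f U R Q \<gamma> x \<le> a * norm x ^ 2"
    and discount: "(1 - \<gamma>) * a \<le> \<gamma> * (l / 2)"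
  shows "V_opt f U R Q \<gamma> x - V_opt f U R Q \<gamma> (f x (u 0)) \<le> - (l / 2) * norm x ^ 2"
  using bellman_gap_decrease[OF \<open>0 < \<gamma>\<close> _ \<open>0 \<le> l\<close> _ V_opt_gap_bellman(1)[OF opt \<gamma> psd]
      upper lower discount] \<open>\<gamma> < 1\<close>
  by simp

lemma discount_threshold_exists:
  fixes a l :: real
  assumes "0 < a" "0 < l"
  obtains \<gamma>s where "0 < \<gamma>s" "\<gamma>s < 1" "\<And>\<gamma>. \<gamma>s < \<gamma> \<Longrightarrow> (1 - \<gamma>) * a \<le> \<gamma> * (l / 2)"
proof
  let ?\<gamma>s = "2 * a / (l + 2 * a)"
  show "0 < ?\<gamma>s" "?\<gamma>s < 1"
    using assms by (auto simp: field_simps)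
  show "(1 - \<gamma>) * a \<le> \<gamma> * (l / 2)" if "?\<gamma>s < \<gamma>" for \<gamma>
    using that assms by (simp add: field_simps)
qed

lemma pos_def_quadratic_form_ge:
  fixes Q :: "real^'n^'n"
  assumes pd: "\<And>x. x \<noteq> 0 \<Longrightarrow> x \<bullet> (Q *v x) > 0"
  obtains l where "l > 0" "\<And>x. l * norm x ^ 2 \<le> x \<bullet> (Q *v x)"
proof -
  have cont: "continuous_on (sphere 0 1) (\<lambda>x::real^'n. x \<bullet> (Q *v x))"
    by (intro continuous_intros linear_continuous_on bounded_linear_intros)
  have "(axis undefined 1 :: real^'n) \<in> sphere 0 1"
    by simp
  then obtain z where z: "z \<in> sphere 0 1"
    and z_min: "\<And>y. y \<in> sphere 0 1 \<Longrightarrow> z \<bullet> (Q *v z) \<le> y \<bullet> (Q *v y)"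
    using continuous_attains_inf[OF compact_sphere _ cont] by blast
  have "z \<bullet> (Q *v z) * norm x ^ 2 \<le> x \<bullet> (Q *v x)" for x
  proof (cases "x = 0")
    case False
    then have "z \<bullet> (Q *v z) \<le> (x /\<^sub>R norm x) \<bullet> (Q *v (x /\<^sub>R norm x))"
      by (intro z_min) simp
    also have "\<dots> = (x \<bullet> (Q *v x)) / norm x ^ 2"
      by (simp add: matrix_vector_mult_scaleR power2_eq_square divide_inverse mult.commute)
    finally show ?thesis
      using False by (simp add: field_simps)
  qed simp
  moreover have "z \<noteq> 0"
    using z by auto
  then have "z \<bullet> (Q *v z) > 0"
    by (rule pd)
  ultimately show ?thesis
    using that by blast
qed

lemma class_Kinf_quadratic:
  assumes "c > 0"
  shows "class_Kinf (\<lambda>t. c * t ^ 2)"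
proof -
  have "filterlim (\<lambda>t::real. c * t ^ 2) at_top at_top"
    by (rule filterlim_tendsto_pos_mult_at_top[OF tendsto_const assms])
       (rule filterlim_pow_at_top[OF _ filterlim_ident], simp)
  moreover have "strict_mono_on {0..} (\<lambda>t::real. c * t ^ 2)"
    using assms by (auto simp: strict_mono_on_def power_strict_mono)
  moreover have "continuous_on {0..} (\<lambda>t::real. c * t ^ 2)"
    by (intro continuous_intros)
  ultimately show ?thesis
    unfolding class_Kinf_def using assms by auto
qed

theorem proposition1:
  fixes f :: "real^'n \<Rightarrow> real^'m \<Rightarrow> real^'n"
    and U :: "(real^'m) set"
    and R :: real
    and Q :: "real^'n^'n"
  assumes equil: "\<exists>ue\<in>U. f 0 ue = 0"
    and A1: "\<exists>Lx Lu. \<forall>x y u w. u \<in> U \<longrightarrow> w \<in> U \<longrightarrow>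
               norm (f x u - f y w) \<le> Lx * norm (x - y) + Lu * norm (u - w)"
    and R_pos: "R > 0"
    and Q_pd: "\<forall>x. x \<noteq> 0 \<longrightarrow> x \<bullet> (Q *v x) > 0"
    and A2: "\<forall>\<gamma> x0. 0 < \<gamma> \<and> \<gamma> < 1 \<longrightarrow> (\<exists>u. optimal_seq f U R Q \<gamma> x0 u)"
    and A3: "\<exists>aV. \<forall>\<gamma> x. 0 < \<gamma> \<and> \<gamma> < 1 \<longrightarrow>
               R / (1 - \<gamma>) - V_opt f U R Q \<gamma> x \<le> aV * norm x ^ 2"
  shows "\<exists>\<alpha>1 \<alpha>2 \<gamma>s c. class_Kinf \<alpha>1 \<and> class_Kinf \<alpha>2 \<and> 0 < \<gamma>s \<and> \<gamma>s < 1 \<and> c > 0 \<and>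
           (\<forall>\<gamma>. \<gamma>s < \<gamma> \<and> \<gamma> < 1 \<longrightarrow>
              (\<forall>x. \<alpha>1 (norm x) \<le> R / (1 - \<gamma>) - V_opt f U R Q \<gamma> x \<and>
                   R / (1 - \<gamma>) - V_opt f U R Q \<gamma> x \<le> \<alpha>2 (norm x)) \<and>
              (\<forall>x u. optimal_seq f U R Q \<gamma> x u \<longrightarrow>
                   V_opt f U R Q \<gamma> x - V_opt f U R Q \<gamma> (f x (u 0)) \<le> - c * norm x ^ 2))"
proof -
  have psd: "x \<bullet> (Q *v x) \<ge> 0" for x
    using Q_pd by (cases "x = 0") (auto intro: less_imp_le)
  obtain l where l: "l > 0" "\<And>x. l * norm x ^ 2 \<le> x \<bullet> (Q *v x)"
    using pos_def_quadratic_form_ge Q_pd by blast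
  obtain aV where aV: "\<And>\<gamma> x. 0 < \<gamma> \<Longrightarrow> \<gamma> < 1 \<Longrightarrow>
      R / (1 - \<gamma>) - V_opt f U R Q \<gamma> x \<le> aV * norm x ^ 2"
    using A3 by blast
  define a where "a = max aV 1"
  have upper: "R / (1 - \<gamma>) - V_opt f U R Q \<gamma> x \<le> a * norm x ^ 2" if "0 < \<gamma>" "\<gamma> < 1" for \<gamma> x
    using aV[OF that, of x] mult_right_mono[of aV a "norm x ^ 2"] unfolding a_def by simp
  have "0 < a"
    unfolding a_def by simp
  obtain \<gamma>s where \<gamma>s: "0 < \<gamma>s" "\<gamma>s < 1" "\<And>\<gamma>. \<gamma>s < \<gamma> \<Longrightarrow> (1 - \<gamma>) * a \<le> \<gamma> * (l / 2)"
    using discount_threshold_exists[OF \<open>0 < a\<close> l(1)] by blast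
  have lower: "l * norm x ^ 2 \<le> R / (1 - \<gamma>) - V_opt f U R Q \<gamma> x"
    if \<gamma>: "0 < \<gamma>" "\<gamma> < 1" for \<gamma> x
    using A2 \<gamma> quadratic_form_le_V_opt_gap[OF _ \<gamma> psd] l(2)[of x] by (meson order_trans)
  have decrease: "V_opt f U R Q \<gamma> x - V_opt f U R Q \<gamma> (f x (u 0)) \<le> - (l / 2) * norm x ^ 2"
    if "\<gamma>s < \<gamma>" "\<gamma> < 1" and opt: "optimal_seq f U R Q \<gamma> x u" for \<gamma> x u
  proof -
    have \<gamma>: "0 < \<gamma>" "\<gamma> < 1"
      using that \<gamma>s(1) by auto
    show ?thesis
      using V_opt_decrease[OF opt \<gamma> psd less_imp_le[OF l(1)] l(2) upper[OF \<gamma>] \<gamma>s(3)[OF \<open>\<gamma>s < \<gamma>\<close>]] .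
  qed
  show ?thesis
    using \<gamma>s(1,2) lower upper decrease l(1) \<open>0 < a\<close>
    by (intro exI[of _ "\<lambda>t. l * t ^ 2"] exI[of _ "\<lambda>t. a * t ^ 2"] exI[of _ \<gamma>s] exI[of _ "l / 2"])
       (auto intro: class_Kinf_quadratic)
qed

end
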